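(* Let $T>0$. Let $g\in C^1(\mathbb{R})$ be an odd function with $\sup_{x\in\mathbb{R}}|g'(x)|<2/T^2$, and let $k:\mathbb{R}\to\mathbb{R}$ be a continuous, odd, $T$-periodic function with $\frac{1}{T}\int_0^T k(t)\,dt=0$. Then the equation $$u''+g(u)=k(t)$$ has exactly one solution $u\in C^2(\mathbb{R})$ that is odd and $T$-periodic.
   Context: A function $h$ is odd if $h(-x)=-h(x)$ for all $x$. *)

theory Defs
  imports "HOL-Analysis.Analysis"
begin

definition odd_fun :: "(real \<Rightarrow> real) \<Rightarrow> bool" where
  "odd_fun h \<longleftrightarrow> (\<forall>x. h (-x) = - h x)"

definition periodic_fun :: "real \<Rightarrow> (real \<Rightarrow> real) \<Rightarrow> bool" where
  "periodic_fun T h \<longleftrightarrow> (\<forall>x. h (x + T) = h x)"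

definition C1_with_deriv :: "(real \<Rightarrow> real) \<Rightarrow> (real \<Rightarrow> real) \<Rightarrow> bool" where
  "C1_with_deriv f f' \<longleftrightarrow> (\<forall>x. (f has_real_derivative f' x) (at x)) \<and> continuous_on UNIV f'"

definition C2_solution :: "(real \<Rightarrow> real) \<Rightarrow> (real \<Rightarrow> real) \<Rightarrow> (real \<Rightarrow> real) \<Rightarrow> bool" where
  "C2_solution g k u \<longleftrightarrow> (\<exists>u' u''. (\<forall>t. (u has_real_derivative u' t) (at t))
      \<and> (\<forall>t. (u' has_real_derivative u'' t) (at t)) \<and> continuous_on UNIV u''
      \<and> (\<forall>t. u'' t + g (u t) = k t))"

end

theory Submission
  imports Defs
begin

text \<open>
An odd \<open>2 l\<close>-periodic function vanishes at \<open>0\<close> and at \<open>l\<close>; conversely, the solution of the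
Dirichlet problem \<open>w'' = f\<close>, \<open>w 0 = w l = 0\<close> is odd and \<open>2 l\<close>-periodic whenever \<open>f\<close> is.
Hence, with \<open>l = T / 2\<close>, the odd \<open>T\<close>-periodic solutions are exactly the fixed points of
\<open>u \<mapsto> G (k - g \<circ> u)\<close>, where \<open>G\<close> solves the Dirichlet problem on \<open>[0, l]\<close>. Integrating
twice gives \<open>\<bar>G f\<bar> \<le> 2 l\<^sup>2 sup \<bar>f\<bar>\<close>, and \<open>g\<close> is Lipschitz with a constant
\<open>c < 2 / T\<^sup>2 = 1 / (2 l\<^sup>2)\<close>, so this map is a contraction of the complete space of bounded
continuous odd \<open>T\<close>-periodic functions and the Banach fixed point theorem applies to it.
\<close>

lemma real_antiderivative_exists:
  fixes f :: "real \<Rightarrow> real"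
  assumes cf: "continuous_on UNIV f"
  shows "\<exists>F. F 0 = 0 \<and> (\<forall>t. (F has_real_derivative f t) (at t))"
proof -
  define F where "F t = (if 0 \<le> t then integral {0..t} f else - integral {t..0} f)" for t
  have "(F has_real_derivative f t) (at t)" for t
  proof -
    define R where "R = \<bar>t\<bar> + 1"
    define G where "G x = integral {-R..x} f - integral {-R..0} f" for x
    have int: "f integrable_on {-R..R}"
      by (intro integrable_continuous_real continuous_on_subset[OF cf]) simp
    have F_eq_G: "F x = G x" if "x \<in> {-R<..<R}" for x
    proof (cases "0 \<le> x")
      case True
      have "f integrable_on {-R..x}" by (rule integrable_subinterval_real[OF int]) (use that in auto)
      then have "integral {-R..0} f + integral {0..x} f = integral {-R..x} f"
        by (rule Henstock_Kurzweil_Integration.integral_combine[rotated 2]) (use True R_def in auto)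
      then show ?thesis unfolding F_def G_def using True by simp
    next
      case False
      have "f integrable_on {-R..0}" by (rule integrable_subinterval_real[OF int]) (use R_def in auto)
      then have "integral {-R..x} f + integral {x..0} f = integral {-R..0} f"
        by (rule Henstock_Kurzweil_Integration.integral_combine[rotated 2]) (use that False in auto)
      then show ?thesis unfolding F_def G_def using False by simp
    qed
    have t_in: "t \<in> {-R..R}" and t_interior: "t \<in> interior {-R..R}"
      unfolding R_def by auto
    have "((\<lambda>x. integral {-R..x} f) has_real_derivative f t) (at t within {-R..R})"
      by (rule integral_has_real_derivative[OF continuous_on_subset[OF cf] t_in]) simp
    then have "(G has_real_derivative f t) (at t within {-R..R})"
      unfolding G_def by (auto intro!: derivative_eq_intros)
    then have "(G has_real_derivative f t) (at t)"
      unfolding at_within_interior[OF t_interior] .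
    then show ?thesis
      by (rule has_field_derivative_transform_within_open[where S = "{-R<..<R}"])
        (use F_eq_G R_def in auto)
  qed
  moreover have "F 0 = 0" unfolding F_def by simp
  ultimately show ?thesis by blast
qed

definition primitive :: "(real \<Rightarrow> real) \<Rightarrow> real \<Rightarrow> real" where
  "primitive f = (SOME F. F 0 = 0 \<and> (\<forall>t. (F has_real_derivative f t) (at t)))"

lemma
  assumes "continuous_on UNIV f"
  shows primitive_zero: "primitive f 0 = 0"
    and has_real_derivative_primitive: "(primitive f has_real_derivative f t) (at t)"
  using someI_ex[OF real_antiderivative_exists[OF assms]] unfolding primitive_def by auto

lemma continuous_on_of_has_real_derivative:
  "(\<And>t. (h has_real_derivative h' t) (at t)) \<Longrightarrow> continuous_on UNIV h"
  by (meson DERIV_continuous continuous_at_imp_continuous_on)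

lemma abs_diff_le_of_derivative_bound:
  fixes f f' :: "real \<Rightarrow> real"
  assumes f': "\<And>s. (f has_real_derivative f' s) (at s)"
    and bound: "\<And>s. s \<in> {a..b} \<Longrightarrow> \<bar>f' s\<bar> \<le> B" and "a \<le> b"
  shows "\<bar>f b - f a\<bar> \<le> B * (b - a)"
proof (cases "a = b")
  case False
  then have "a < b" using \<open>a \<le> b\<close> by simp
  with MVT2[of a b f f'] f' obtain z where z: "a < z" "z < b" "f b - f a = (b - a) * f' z"
    by blast
  have "\<bar>f' z\<bar> \<le> B" using bound z by simp
  then show ?thesis using z \<open>a < b\<close> by (simp add: abs_mult mult.commute mult_left_mono)
qed simp

lemma abs_diff_le_of_abs_derivative_le:
  fixes g g' :: "real \<Rightarrow> real"
  assumes "\<And>x. (g has_real_derivative g' x) (at x)" and "\<And>x. \<bar>g' x\<bar> \<le> c"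
  shows "\<bar>g x - g y\<bar> \<le> c * \<bar>x - y\<bar>"
proof (cases "y \<le> x")
  case True
  then show ?thesis using abs_diff_le_of_derivative_bound[OF assms(1), of y x c] assms(2) by simp
next
  case False
  then show ?thesis using abs_diff_le_of_derivative_bound[OF assms(1), of x y c] assms(2)
    by (simp add: abs_minus_commute)
qed

lemma affine_of_second_derivative_zero:
  fixes h h' :: "real \<Rightarrow> real"
  assumes h': "\<And>t. (h has_real_derivative h' t) (at t)"
    and h'': "\<And>t. (h' has_real_derivative 0) (at t)"
  shows "h t = h a + h' a * (t - a)"
proof -
  have h'_const: "h' x = h' a" for x using h'' DERIV_isconst_all by blast
  have "((\<lambda>t. h t - h' a * t) has_real_derivative 0) (at x)" for x
    using h'[of x] h'_const[of x] by (auto intro!: derivative_eq_intros)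
  then have "h t - h' a * t = h a - h' a * a" using DERIV_isconst_all by blast
  then show ?thesis by (simp add: algebra_simps)
qed

lemma eq_of_same_second_derivative:
  fixes u u' v v' f :: "real \<Rightarrow> real"
  assumes "\<And>t. (u has_real_derivative u' t) (at t)" "\<And>t. (u' has_real_derivative f t) (at t)"
    and "\<And>t. (v has_real_derivative v' t) (at t)" "\<And>t. (v' has_real_derivative f t) (at t)"
    and "u a = v a" "u' a = v' a"
  shows "u t = v t"
proof -
  have "u t - v t = (u a - v a) + (u' a - v' a) * (t - a)"
    by (rule affine_of_second_derivative_zero[where h = "\<lambda>t. u t - v t" and h' = "\<lambda>t. u' t - v' t"])
      (use assms in \<open>auto intro!: derivative_eq_intros\<close>)
  then show ?thesis using assms(5,6) by simp
qed

lemma reflect_has_real_derivative: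
  "(\<And>t. (h has_real_derivative h' t) (at t)) \<Longrightarrow> ((\<lambda>t. h (- t)) has_real_derivative - h' (- t)) (at t)"
  using DERIV_mirror by blast

lemma shift_has_real_derivative:
  "(\<And>t. (h has_real_derivative h' t) (at t)) \<Longrightarrow> ((\<lambda>t. h (t + c)) has_real_derivative h' (t + c)) (at t)"
  using DERIV_shift by blast

lemma odd_fun_derivative_even:
  assumes "odd_fun h" "\<And>t. (h has_real_derivative h' t) (at t)"
  shows "h' (- t) = h' t"
proof -
  have "((\<lambda>t. h (- t)) has_real_derivative - h' (- t)) (at t)"
    by (rule reflect_has_real_derivative) (rule assms(2))
  moreover have "(\<lambda>t. h (- t)) = (\<lambda>t. - h t)" using assms(1) unfolding odd_fun_def by simp
  ultimately have "((\<lambda>t. - h t) has_real_derivative - h' (- t)) (at t)" by simp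
  moreover have "((\<lambda>t. - h t) has_real_derivative - h' t) (at t)"
    using assms(2) by (auto intro!: derivative_eq_intros)
  ultimately show ?thesis using DERIV_unique by fastforce
qed

definition dirichlet_solution :: "real \<Rightarrow> (real \<Rightarrow> real) \<Rightarrow> real \<Rightarrow> real" where
  "dirichlet_solution l f t = primitive (primitive f) t - t * (primitive (primitive f) l / l)"

lemma dirichlet_solution_second_derivative:
  assumes "continuous_on UNIV f"
  obtains w' where "\<And>t. (dirichlet_solution l f has_real_derivative w' t) (at t)"
    and "\<And>t. (w' has_real_derivative f t) (at t)"
proof
  define c where "c = primitive (primitive f) l / l"
  have "continuous_on UNIV (primitive f)"
    using has_real_derivative_primitive[OF assms] by (rule continuous_on_of_has_real_derivative)
  from has_real_derivative_primitive[OF this]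
  show "(dirichlet_solution l f has_real_derivative primitive f t - c) (at t)" for t
    unfolding dirichlet_solution_def[abs_def] c_def[symmetric] by (auto intro!: derivative_eq_intros)
  show "((\<lambda>t. primitive f t - c) has_real_derivative f t) (at t)" for t
    using has_real_derivative_primitive[OF assms] by (auto intro!: derivative_eq_intros)
qed

lemma dirichlet_solution_at_zero:
  assumes "continuous_on UNIV f"
  shows "dirichlet_solution l f 0 = 0"
proof -
  have "continuous_on UNIV (primitive f)"
    using has_real_derivative_primitive[OF assms] by (rule continuous_on_of_has_real_derivative)
  then show ?thesis unfolding dirichlet_solution_def by (simp add: primitive_zero)
qed

lemma dirichlet_solution_at_endpoint: "l \<noteq> 0 \<Longrightarrow> dirichlet_solution l f l = 0"
  unfolding dirichlet_solution_def by simp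

lemma dirichlet_solution_unique:
  fixes w w' f :: "real \<Rightarrow> real"
  assumes f: "continuous_on UNIV f" and "l \<noteq> 0"
    and w': "\<And>t. (w has_real_derivative w' t) (at t)"
    and w'': "\<And>t. (w' has_real_derivative f t) (at t)"
    and "w 0 = 0" "w l = 0"
  shows "w = dirichlet_solution l f"
proof
  fix t
  obtain W' where W': "\<And>t. (dirichlet_solution l f has_real_derivative W' t) (at t)"
    and W'': "\<And>t. (W' has_real_derivative f t) (at t)"
    using dirichlet_solution_second_derivative[OF f] by blast
  define h where "h t = w t - dirichlet_solution l f t" for t
  have affine: "h s = h 0 + (w' 0 - W' 0) * (s - 0)" for s
    unfolding h_def
    by (rule affine_of_second_derivative_zero) (use w' w'' W' W'' in \<open>auto intro!: derivative_eq_intros\<close>)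
  have "h 0 = 0" "h l = 0"
    unfolding h_def using assms(5,6) dirichlet_solution_at_zero[OF f] dirichlet_solution_at_endpoint[OF \<open>l \<noteq> 0\<close>]
    by simp_all
  with affine[of l] \<open>l \<noteq> 0\<close> have "w' 0 - W' 0 = 0" by simp
  with affine[of t] \<open>h 0 = 0\<close> show "w t = dirichlet_solution l f t" unfolding h_def by simp
qed

lemma dirichlet_solution_diff:
  assumes f1: "continuous_on UNIV f1" and f2: "continuous_on UNIV f2" and "l \<noteq> 0"
  shows "dirichlet_solution l (\<lambda>s. f1 s - f2 s) t = dirichlet_solution l f1 t - dirichlet_solution l f2 t"
proof -
  obtain W1' where "\<And>t. (dirichlet_solution l f1 has_real_derivative W1' t) (at t)"
    and "\<And>t. (W1' has_real_derivative f1 t) (at t)"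
    using dirichlet_solution_second_derivative[OF f1] by blast
  moreover obtain W2' where "\<And>t. (dirichlet_solution l f2 has_real_derivative W2' t) (at t)"
    and "\<And>t. (W2' has_real_derivative f2 t) (at t)"
    using dirichlet_solution_second_derivative[OF f2] by blast
  ultimately have "(\<lambda>t. dirichlet_solution l f1 t - dirichlet_solution l f2 t)
      = dirichlet_solution l (\<lambda>s. f1 s - f2 s)"
    using f1 f2 \<open>l \<noteq> 0\<close>
    by (intro dirichlet_solution_unique[where w' = "\<lambda>t. W1' t - W2' t"])
      (auto intro!: derivative_eq_intros continuous_intros
        simp: dirichlet_solution_at_zero dirichlet_solution_at_endpoint)
  then show ?thesis by metis
qed

lemma odd_fun_dirichlet_solution:
  assumes f: "continuous_on UNIV f" and "odd_fun f"
  shows "odd_fun (dirichlet_solution l f)"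
  unfolding odd_fun_def
proof
  fix x
  obtain W' where W': "\<And>t. (dirichlet_solution l f has_real_derivative W' t) (at t)"
    and W'': "\<And>t. (W' has_real_derivative f t) (at t)"
    using dirichlet_solution_second_derivative[OF f] by blast
  have reflected: "((\<lambda>t. W' (- t)) has_real_derivative f t) (at t)" for t
    using reflect_has_real_derivative[OF W'', of t] \<open>odd_fun f\<close> unfolding odd_fun_def by simp
  have "dirichlet_solution l f t = - dirichlet_solution l f (- t)" for t
    by (rule eq_of_same_second_derivative[OF W' W'' _ reflected, where a = 0])
      (use reflect_has_real_derivative[OF W'] dirichlet_solution_at_zero[OF f]
        in \<open>auto intro!: derivative_eq_intros\<close>)
  from this[of "- x"] show "dirichlet_solution l f (- x) = - dirichlet_solution l f x" by simp
qed

lemma periodic_fun_dirichlet_solution: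
  assumes f: "continuous_on UNIV f" and "odd_fun f" and "periodic_fun (2 * l) f" and "l \<noteq> 0"
  shows "periodic_fun (2 * l) (dirichlet_solution l f)"
  unfolding periodic_fun_def
proof
  fix x
  obtain W' where W': "\<And>t. (dirichlet_solution l f has_real_derivative W' t) (at t)"
    and W'': "\<And>t. (W' has_real_derivative f t) (at t)"
    using dirichlet_solution_second_derivative[OF f] by blast
  have shifted: "((\<lambda>t. W' (t + 2 * l)) has_real_derivative f t) (at t)" for t
    using shift_has_real_derivative[OF W'', where c = "2 * l"] \<open>periodic_fun (2 * l) f\<close>
    unfolding periodic_fun_def by simp
  have odd: "odd_fun (dirichlet_solution l f)" by (rule odd_fun_dirichlet_solution[OF assms(1,2)])
  have "dirichlet_solution l f (- l + 2 * l) = dirichlet_solution l f (- l)"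
    using odd dirichlet_solution_at_endpoint[OF \<open>l \<noteq> 0\<close>] unfolding odd_fun_def by simp
  moreover have "W' (- l + 2 * l) = W' (- l)"
    using odd_fun_derivative_even[OF odd W', of l] by simp
  ultimately show "dirichlet_solution l f (x + 2 * l) = dirichlet_solution l f x"
    by (rule eq_of_same_second_derivative[OF shift_has_real_derivative[OF W', where c = "2 * l"] shifted W' W''])
qed

lemma periodic_fun_int_multiple:
  assumes "periodic_fun T h"
  shows "h (x + of_int n * T) = h x"
proof -
  have nat_multiple: "h (y + of_nat m * T) = h y" for y m
  proof (induction m)
    case (Suc m)
    have "h (y + of_nat (Suc m) * T) = h ((y + of_nat m * T) + T)"
      by (simp add: algebra_simps)
    also have "\<dots> = h y" using assms Suc unfolding periodic_fun_def by simp
    finally show ?case .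
  qed simp
  show ?thesis
  proof (cases "n \<ge> 0")
    case True
    then show ?thesis using nat_multiple[of x "nat n"] by simp
  next
    case False
    have "h ((x + of_int n * T) + of_nat (nat (- n)) * T) = h (x + of_int n * T)"
      by (rule nat_multiple)
    moreover have "(x + of_int n * T) + of_nat (nat (- n)) * T = x" using False by simp
    ultimately show ?thesis by simp
  qed
qed

lemma odd_periodic_abs_le:
  assumes "odd_fun h" "periodic_fun (2 * l) h" "l > 0"
    and bound: "\<forall>s\<in>{0..l}. \<bar>h s\<bar> \<le> M"
  shows "\<bar>h t\<bar> \<le> M"
proof -
  define n where "n = \<lfloor>(t + l) / (2 * l)\<rfloor>"
  define s where "s = t - of_int n * (2 * l)"
  have "of_int n \<le> (t + l) / (2 * l)" "(t + l) / (2 * l) < of_int n + 1"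
    unfolding n_def by linarith+
  then have "of_int n * (2 * l) \<le> t + l" "t + l < (of_int n + 1) * (2 * l)"
    using \<open>l > 0\<close> by (simp_all add: field_simps)
  then have s_range: "- l \<le> s" "s < l" unfolding s_def by (simp_all add: algebra_simps)
  have "h t = h s"
    using periodic_fun_int_multiple[OF assms(2), of s n] unfolding s_def by simp
  moreover have "\<bar>h s\<bar> = \<bar>h (- s)\<bar>" using \<open>odd_fun h\<close> unfolding odd_fun_def by simp
  moreover have "\<bar>h s\<bar> \<le> M \<or> \<bar>h (- s)\<bar> \<le> M" using bound s_range by (cases "0 \<le> s") auto
  ultimately show ?thesis by linarith
qed

lemma bcontfun_of_odd_periodic:
  assumes "continuous_on UNIV h" "odd_fun h" "periodic_fun (2 * l) h" "l > 0"
  shows "h \<in> bcontfun"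
proof -
  have "compact (h ` {0..l})"
    by (rule compact_continuous_image[OF continuous_on_subset[OF assms(1)]]) auto
  then obtain M where "\<forall>y\<in>h ` {0..l}. norm y \<le> M"
    using compact_imp_bounded bounded_iff by metis
  then have "\<forall>s\<in>{0..l}. \<bar>h s\<bar> \<le> M" by auto
  then show ?thesis
    using assms odd_periodic_abs_le[OF assms(2-4)] by (intro bcontfun_normI[where b = M]) auto
qed

lemma dirichlet_solution_abs_le:
  assumes f: "continuous_on UNIV f" and "l > 0"
    and bound: "\<forall>s\<in>{0..l}. \<bar>f s\<bar> \<le> M" and t: "t \<in> {0..l}"
  shows "\<bar>dirichlet_solution l f t\<bar> \<le> 2 * M * l\<^sup>2"
proof -
  define P where "P = primitive f"
  define A where "A = primitive P"
  have "0 \<le> M" using bound \<open>l > 0\<close> by force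
  have P': "(P has_real_derivative f s) (at s)" for s
    unfolding P_def by (rule has_real_derivative_primitive[OF f])
  have P: "continuous_on UNIV P" by (rule continuous_on_of_has_real_derivative[OF P'])
  have A': "(A has_real_derivative P s) (at s)" for s
    unfolding A_def by (rule has_real_derivative_primitive[OF P])
  have P_bound: "\<bar>P s\<bar> \<le> M * l" if "s \<in> {0..l}" for s
  proof -
    have "\<bar>P s - P 0\<bar> \<le> M * (s - 0)"
      by (rule abs_diff_le_of_derivative_bound[OF P']) (use bound that in auto)
    also have "\<dots> \<le> M * l" using that \<open>0 \<le> M\<close> by (simp add: mult_left_mono)
    finally show ?thesis using primitive_zero[OF f] unfolding P_def by simp
  qed
  have A_bound: "\<bar>A s\<bar> \<le> M * l * l" if "s \<in> {0..l}" for s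
  proof -
    have "\<bar>A s - A 0\<bar> \<le> M * l * (s - 0)"
      by (rule abs_diff_le_of_derivative_bound[OF A']) (use P_bound that in auto)
    also have "\<dots> \<le> M * l * l" using that \<open>0 \<le> M\<close> \<open>l > 0\<close> by (simp add: mult_left_mono)
    finally show ?thesis using primitive_zero[OF P] unfolding A_def by simp
  qed
  have "0 \<le> t / l" "t / l \<le> 1" using t \<open>l > 0\<close> by auto
  then have "\<bar>t * (A l / l)\<bar> \<le> \<bar>A l\<bar>"
    using mult_right_mono[of "t / l" 1 "\<bar>A l\<bar>"] t \<open>l > 0\<close> by (simp add: abs_mult)
  then have "\<bar>A t - t * (A l / l)\<bar> \<le> M * l * l + M * l * l"
    using abs_triangle_ineq4[of "A t" "t * (A l / l)"] A_bound[OF t] A_bound[of l] \<open>l > 0\<close>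
    by force
  then show ?thesis unfolding dirichlet_solution_def P_def[symmetric] A_def[symmetric]
    by (simp add: power2_eq_square)
qed

lemma odd_periodic_dirichlet_solution:
  assumes f: "continuous_on UNIV f" "odd_fun f" "periodic_fun (2 * l) f" and "l \<noteq> 0"
  shows "continuous_on UNIV (dirichlet_solution l f) \<and> odd_fun (dirichlet_solution l f)
    \<and> periodic_fun (2 * l) (dirichlet_solution l f)"
proof -
  obtain W' where "\<And>t. (dirichlet_solution l f has_real_derivative W' t) (at t)"
    using dirichlet_solution_second_derivative[OF f(1)] by blast
  then show ?thesis
    using continuous_on_of_has_real_derivative odd_fun_dirichlet_solution[OF f(1,2)]
      periodic_fun_dirichlet_solution[OF f \<open>l \<noteq> 0\<close>] by blast
qed

lemma continuous_on_apply_bcontfun_at: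
  "continuous_on UNIV (\<lambda>v::real \<Rightarrow>\<^sub>C real. apply_bcontfun v x)"
  unfolding continuous_on_iff using dist_bounded le_less_trans by blast

lemma closed_odd_periodic_bcontfun:
  "closed {v::real \<Rightarrow>\<^sub>C real. odd_fun (apply_bcontfun v) \<and> periodic_fun T (apply_bcontfun v)}"
proof -
  have "{v::real \<Rightarrow>\<^sub>C real. odd_fun (apply_bcontfun v) \<and> periodic_fun T (apply_bcontfun v)}
      = {v. \<forall>x. apply_bcontfun v (- x) = - apply_bcontfun v x}
        \<inter> {v. \<forall>x. apply_bcontfun v (x + T) = apply_bcontfun v x}"
    unfolding odd_fun_def periodic_fun_def by auto
  moreover have "closed {v::real \<Rightarrow>\<^sub>C real. \<forall>x. apply_bcontfun v (- x) = - apply_bcontfun v x}"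
    by (intro closed_Collect_all closed_Collect_eq continuous_on_apply_bcontfun_at continuous_on_minus)
  moreover have "closed {v::real \<Rightarrow>\<^sub>C real. \<forall>x. apply_bcontfun v (x + T) = apply_bcontfun v x}"
    by (intro closed_Collect_all closed_Collect_eq continuous_on_apply_bcontfun_at)
  ultimately show ?thesis by (simp add: closed_Int)
qed

lemma unique_fixed_point_of_sup_contraction:
  fixes F :: "(real \<Rightarrow> real) \<Rightarrow> real \<Rightarrow> real"
  assumes closed: "closed {v. P (apply_bcontfun v)}"
    and bounded: "\<And>u. P u \<Longrightarrow> u \<in> bcontfun"
    and "P u\<^sub>0"
    and invariant: "\<And>u. P u \<Longrightarrow> P (F u)"
    and contraction: "\<And>u v d t. P u \<Longrightarrow> P v \<Longrightarrow> (\<And>s. \<bar>u s - v s\<bar> \<le> d) \<Longrightarrow> \<bar>F u t - F v t\<bar> \<le> q * d"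
    and "0 \<le> q" "q < 1"
  shows "\<exists>!u. P u \<and> F u = u"
proof -
  define S where "S = {v. P (apply_bcontfun v)}"
  define \<Phi> where "\<Phi> v = Bcontfun (F (apply_bcontfun v))" for v
  have \<Phi>_apply: "apply_bcontfun (\<Phi> v) = F (apply_bcontfun v)" if "v \<in> S" for v
    unfolding \<Phi>_def using that by (intro Bcontfun_inverse bounded invariant) (simp add: S_def)
  have "\<Phi> ` S \<subseteq> S" using \<Phi>_apply invariant unfolding S_def by auto
  moreover have "dist (\<Phi> x) (\<Phi> y) \<le> q * dist x y" if "x \<in> S" "y \<in> S" for x y
  proof (rule dist_bound)
    fix t
    have "\<bar>F (apply_bcontfun x) t - F (apply_bcontfun y) t\<bar> \<le> q * dist x y"
      using that dist_bounded[of x _ y] unfolding S_def dist_real_def by (intro contraction) auto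
    then show "dist (\<Phi> x t) (\<Phi> y t) \<le> q * dist x y"
      by (simp add: \<Phi>_apply that dist_real_def)
  qed
  moreover have "complete S" unfolding S_def using closed by (simp add: complete_eq_closed)
  moreover have "Bcontfun u\<^sub>0 \<in> S"
    using \<open>P u\<^sub>0\<close> Bcontfun_inverse[OF bounded[OF \<open>P u\<^sub>0\<close>]] unfolding S_def by simp
  ultimately have "\<exists>!v\<in>S. \<Phi> v = v"
    using \<open>0 \<le> q\<close> \<open>q < 1\<close> by (intro Banach_fix) auto
  then obtain v where v: "v \<in> S" "\<Phi> v = v" and v_unique: "\<And>w. w \<in> S \<Longrightarrow> \<Phi> w = w \<Longrightarrow> w = v"
    by blast
  show ?thesis
  proof (rule ex1I[of _ "apply_bcontfun v"])
    show "P (apply_bcontfun v) \<and> F (apply_bcontfun v) = apply_bcontfun v"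
      using v \<Phi>_apply[OF v(1)] unfolding S_def by auto
  next
    fix u
    assume u: "P u \<and> F u = u"
    then have u_apply: "apply_bcontfun (Bcontfun u) = u" using bounded Bcontfun_inverse by blast
    then have "Bcontfun u \<in> S" using u unfolding S_def by simp
    moreover from this have "\<Phi> (Bcontfun u) = Bcontfun u"
      using u u_apply by (intro bcontfun_eqI) (simp add: \<Phi>_apply)
    ultimately show "u = apply_bcontfun v" using v_unique u_apply by metis
  qed
qed

lemma unique_odd_periodic_dirichlet_fixed_point:
  fixes N :: "(real \<Rightarrow> real) \<Rightarrow> real \<Rightarrow> real"
  assumes "l > 0" "0 \<le> c" "2 * c * l\<^sup>2 < 1"
    and N_invariant: "\<And>u. continuous_on UNIV u \<Longrightarrow> odd_fun u \<Longrightarrow> periodic_fun (2 * l) u \<Longrightarrow>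
      continuous_on UNIV (N u) \<and> odd_fun (N u) \<and> periodic_fun (2 * l) (N u)"
    and N_lipschitz: "\<And>u v s. \<bar>N u s - N v s\<bar> \<le> c * \<bar>u s - v s\<bar>"
  shows "\<exists>!u. continuous_on UNIV u \<and> odd_fun u \<and> periodic_fun (2 * l) u
    \<and> dirichlet_solution l (N u) = u"
proof -
  have l: "l \<noteq> 0" using \<open>l > 0\<close> by simp
  have contraction: "\<bar>dirichlet_solution l (N u) t - dirichlet_solution l (N v) t\<bar> \<le> (2 * c * l\<^sup>2) * d"
    if u: "continuous_on UNIV u" "odd_fun u" "periodic_fun (2 * l) u"
      and v: "continuous_on UNIV v" "odd_fun v" "periodic_fun (2 * l) v"
      and d: "\<And>s. \<bar>u s - v s\<bar> \<le> d" for u v d t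
  proof -
    define f where "f s = N u s - N v s" for s
    have Nu: "continuous_on UNIV (N u)" "odd_fun (N u)" "periodic_fun (2 * l) (N u)"
      using N_invariant[OF u] by auto
    have Nv: "continuous_on UNIV (N v)" "odd_fun (N v)" "periodic_fun (2 * l) (N v)"
      using N_invariant[OF v] by auto
    have f: "continuous_on UNIV f" "odd_fun f" "periodic_fun (2 * l) f"
      using Nu Nv unfolding f_def odd_fun_def periodic_fun_def by (auto intro!: continuous_intros)
    have "\<bar>f s\<bar> \<le> c * d" for s
      using N_lipschitz[of u s v] d[of s] \<open>0 \<le> c\<close> unfolding f_def by (meson mult_left_mono order_trans)
    then have "\<bar>dirichlet_solution l f t\<bar> \<le> 2 * (c * d) * l\<^sup>2"
      using dirichlet_solution_abs_le[OF f(1) \<open>l > 0\<close>] odd_periodic_abs_le \<open>l > 0\<close>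
        odd_periodic_dirichlet_solution[OF f l] by blast
    then show ?thesis
      unfolding f_def by (simp add: dirichlet_solution_diff[OF Nu(1) Nv(1) l] algebra_simps)
  qed
  have "\<exists>!u. (continuous_on UNIV u \<and> odd_fun u \<and> periodic_fun (2 * l) u)
      \<and> dirichlet_solution l (N u) = u"
  proof (rule unique_fixed_point_of_sup_contraction)
    show "closed {v. continuous_on UNIV (apply_bcontfun v) \<and> odd_fun (apply_bcontfun v)
        \<and> periodic_fun (2 * l) (apply_bcontfun v)}"
      using closed_odd_periodic_bcontfun by simp
    show "continuous_on UNIV (\<lambda>_. 0) \<and> odd_fun (\<lambda>_. 0) \<and> periodic_fun (2 * l) (\<lambda>_. 0::real)"
      unfolding odd_fun_def periodic_fun_def by simp
  qed (use assms bcontfun_of_odd_periodic odd_periodic_dirichlet_solution[OF _ _ _ l] N_invariant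
      contraction in auto)
  then show ?thesis by (simp only: conj_assoc)
qed

lemma odd_periodic_solution_iff_dirichlet_fixed_point:
  fixes g k u :: "real \<Rightarrow> real"
  assumes "l \<noteq> 0" and g: "continuous_on UNIV g" and k: "continuous_on UNIV k"
  shows "C2_solution g k u \<and> odd_fun u \<and> periodic_fun (2 * l) u \<longleftrightarrow>
    continuous_on UNIV u \<and> odd_fun u \<and> periodic_fun (2 * l) u
    \<and> dirichlet_solution l (\<lambda>s. k s - g (u s)) = u"
proof -
  have f: "continuous_on UNIV (\<lambda>s. k s - g (u s))" if "continuous_on UNIV u"
    using that by (intro continuous_intros k continuous_on_compose2[OF g]) auto
  show ?thesis
  proof safe
    assume "C2_solution g k u" "odd_fun u" "periodic_fun (2 * l) u"
    then obtain u' u'' where u': "\<And>t. (u has_real_derivative u' t) (at t)"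
      and u'': "\<And>t. (u' has_real_derivative u'' t) (at t)" and eq: "\<And>t. u'' t + g (u t) = k t"
      unfolding C2_solution_def by blast
    show u_cont: "continuous_on UNIV u" by (rule continuous_on_of_has_real_derivative[OF u'])
    have "u (- 0) = - u 0" using \<open>odd_fun u\<close> unfolding odd_fun_def by blast
    then have "u 0 = 0" by simp
    moreover have "u l = 0"
    proof -
      have "u l = u (- l + 2 * l)" by simp
      also have "\<dots> = u (- l)" using \<open>periodic_fun (2 * l) u\<close> unfolding periodic_fun_def by blast
      also have "\<dots> = - u l" using \<open>odd_fun u\<close> unfolding odd_fun_def by blast
      finally show ?thesis by simp
    qed
    moreover have "(u' has_real_derivative k t - g (u t)) (at t)" for t
      using u''[of t] unfolding eq[of t, symmetric] by simp
    ultimately show "dirichlet_solution l (\<lambda>s. k s - g (u s)) = u"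
      by (intro dirichlet_solution_unique[OF f[OF u_cont] \<open>l \<noteq> 0\<close> u', symmetric])
  next
    assume u_cont: "continuous_on UNIV u" and u_eq: "dirichlet_solution l (\<lambda>s. k s - g (u s)) = u"
    obtain W' where W': "\<And>t. (dirichlet_solution l (\<lambda>s. k s - g (u s)) has_real_derivative W' t) (at t)"
      and W'': "\<And>t. (W' has_real_derivative k t - g (u t)) (at t)"
      using dirichlet_solution_second_derivative[OF f[OF u_cont]] by blast
    have "(u has_real_derivative W' t) (at t)" for t by (subst u_eq[symmetric]) (rule W')
    then show "C2_solution g k u"
      unfolding C2_solution_def using W'' f[OF u_cont] by fastforce
  qed
qed

theorem theorem2:
  fixes T :: real and g g' k :: "real \<Rightarrow> real"
  assumes "T > 0"
    and "C1_with_deriv g g'"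
    and "odd_fun g"
    and "\<exists>c < 2 / T^2. \<forall>x. \<bar>g' x\<bar> \<le> c"
    and "continuous_on UNIV k"
    and "odd_fun k"
    and "periodic_fun T k"
    and "(1 / T) * integral {0..T} k = 0"
  shows "\<exists>!u. C2_solution g k u \<and> odd_fun u \<and> periodic_fun T u"
proof -
  define l where "l = T / 2"
  have l: "l > 0" and T: "T = 2 * l" using \<open>T > 0\<close> unfolding l_def by auto
  have g': "\<And>x. (g has_real_derivative g' x) (at x)"
    using \<open>C1_with_deriv g g'\<close> unfolding C1_with_deriv_def by blast
  then have g: "continuous_on UNIV g" by (rule continuous_on_of_has_real_derivative)
  obtain c where "c < 2 / T^2" and g'_bound: "\<And>x. \<bar>g' x\<bar> \<le> c" using assms(4) by blast
  have "0 \<le> c" using g'_bound[of 0] by linarith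
  have "2 * c * l\<^sup>2 < 1"
    using \<open>c < 2 / T^2\<close> l unfolding T by (simp add: field_simps power2_eq_square)
  have N_invariant: "\<And>u. continuous_on UNIV u \<Longrightarrow> odd_fun u \<Longrightarrow> periodic_fun (2 * l) u \<Longrightarrow>
      continuous_on UNIV (\<lambda>s. k s - g (u s)) \<and> odd_fun (\<lambda>s. k s - g (u s))
      \<and> periodic_fun (2 * l) (\<lambda>s. k s - g (u s))"
    using \<open>continuous_on UNIV k\<close> \<open>odd_fun k\<close> \<open>odd_fun g\<close> \<open>periodic_fun T k\<close>
    unfolding odd_fun_def periodic_fun_def T
    by (auto intro!: continuous_intros continuous_on_compose2[OF g])
  have N_lipschitz: "\<And>u v s. \<bar>(k s - g (u s)) - (k s - g (v s))\<bar> \<le> c * \<bar>u s - v s\<bar>"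
    using abs_diff_le_of_abs_derivative_le[OF g' g'_bound] by (simp add: abs_minus_commute)
  have "l \<noteq> 0" using l by simp
  have "\<exists>!u. continuous_on UNIV u \<and> odd_fun u \<and> periodic_fun (2 * l) u
      \<and> dirichlet_solution l (\<lambda>s. k s - g (u s)) = u"
    by (rule unique_odd_periodic_dirichlet_fixed_point[OF l \<open>0 \<le> c\<close> \<open>2 * c * l\<^sup>2 < 1\<close>])
      (use N_invariant N_lipschitz in blast)+
  then show ?thesis
    unfolding T odd_periodic_solution_iff_dirichlet_fixed_point[OF \<open>l \<noteq> 0\<close> g \<open>continuous_on UNIV k\<close>] .
qed

end
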